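(* Let $G$ be a graph of order $n$. The following are equivalent: (1) every component of $G$ with at least two vertices is a corona; (2) $\gamma_{\rm cer}(G)=n$; (3) $\Gamma_{\rm cer}(G)=n$.
   Context: All graphs are finite and simple. A set $D\subseteq V_G$ is a dominating set of $G$ if every vertex of $V_G-D$ has a neighbor in $D$. A set $D$ is a certified dominating set of $G$ if $D$ is dominating and every vertex of $D$ has either zero or at least two neighbors in $V_G-D$; it is minimal if no proper subset is a certified dominating set. $\gamma_{\rm cer}(G)$ is the minimum cardinality of a certified dominating set, and $\Gamma_{\rm cer}(G)$ is the maximum cardinality of a minimal certified dominating set. A graph is a corona if it equals $H\circ K_1$ for some graph $H$, i.e., it is obtained from $H$ by attaching one new pendant vertex to each vertex of $H$. *)

theory Defs
  imports Main
begin

definition graph :: "'a set \<Rightarrow> ('a \<Rightarrow> 'a \<Rightarrow> bool) \<Rightarrow> bool" where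
  "graph V E \<longleftrightarrow> finite V \<and> (\<forall>x y. E x y \<longrightarrow> E y x) \<and> (\<forall>x. \<not> E x x)
     \<and> (\<forall>x y. E x y \<longrightarrow> x \<in> V \<and> y \<in> V)"

definition dominating :: "'a set \<Rightarrow> ('a \<Rightarrow> 'a \<Rightarrow> bool) \<Rightarrow> 'a set \<Rightarrow> bool" where
  "dominating V E D \<longleftrightarrow> D \<subseteq> V \<and> (\<forall>v \<in> V - D. \<exists>u \<in> D. E v u)"

definition certified_dominating :: "'a set \<Rightarrow> ('a \<Rightarrow> 'a \<Rightarrow> bool) \<Rightarrow> 'a set \<Rightarrow> bool" where
  "certified_dominating V E D \<longleftrightarrow> dominating V E D \<and>
     (\<forall>v \<in> D. card {u \<in> V - D. E v u} = 0 \<or> card {u \<in> V - D. E v u} \<ge> 2)"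

definition minimal_certified_dominating :: "'a set \<Rightarrow> ('a \<Rightarrow> 'a \<Rightarrow> bool) \<Rightarrow> 'a set \<Rightarrow> bool" where
  "minimal_certified_dominating V E D \<longleftrightarrow> certified_dominating V E D \<and>
     (\<forall>D'. D' \<subset> D \<longrightarrow> \<not> certified_dominating V E D')"

definition gamma_cer :: "'a set \<Rightarrow> ('a \<Rightarrow> 'a \<Rightarrow> bool) \<Rightarrow> nat" where
  "gamma_cer V E = Min (card ` {D. certified_dominating V E D})"

definition Gamma_cer :: "'a set \<Rightarrow> ('a \<Rightarrow> 'a \<Rightarrow> bool) \<Rightarrow> nat" where
  "Gamma_cer V E = Max (card ` {D. minimal_certified_dominating V E D})"

definition components :: "'a set \<Rightarrow> ('a \<Rightarrow> 'a \<Rightarrow> bool) \<Rightarrow> 'a set set" where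
  "components V E = (\<lambda>v. {u. E\<^sup>*\<^sup>* v u}) ` V"

definition induced :: "('a \<Rightarrow> 'a \<Rightarrow> bool) \<Rightarrow> 'a set \<Rightarrow> 'a \<Rightarrow> 'a \<Rightarrow> bool" where
  "induced E W = (\<lambda>x y. E x y \<and> x \<in> W \<and> y \<in> W)"

text \<open>(W,F) is a corona H o K1: there is a vertex set H \<subseteq> W (inducing the graph H)
  and a bijection p from H onto the remaining vertices such that each remaining vertex
  p h is adjacent exactly to h.\<close>
definition is_corona :: "'a set \<Rightarrow> ('a \<Rightarrow> 'a \<Rightarrow> bool) \<Rightarrow> bool" where
  "is_corona W F \<longleftrightarrow> (\<exists>H p. H \<subseteq> W \<and> bij_betw p H (W - H) \<and>
     (\<forall>x \<in> W - H. \<forall>y. F x y \<longleftrightarrow> (y \<in> H \<and> p y = x)))"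

end

theory Submission
  imports Defs
begin

text \<open>Both \<open>gamma_cer V E = card V\<close> and \<open>Gamma_cer V E = card V\<close> say that \<open>V\<close> is the
  only certified dominating set (a minimum certified dominating set is minimal). In a corona
  every support vertex lies in each certified dominating set \<open>D\<close>, since otherwise its leaf would
  be undominated or its only neighbour outside \<open>D\<close>; a leaf outside \<open>D\<close> would then be the only
  neighbour of its support outside \<open>D\<close>. Conversely, if \<open>V\<close> is the only certified dominating
  set, then two leaves with a common neighbour are excluded because \<open>V - {a, b}\<close> would be
  certified, and every non-isolated non-leaf vertex has a leaf neighbour: otherwise the vertices
  at distance at least two from all leaves, minus a maximal independent set of those with two
  such neighbours, together with the leaves hanging at supports adjacent to them, form a
  nonempty set whose complement is certified. These two properties say precisely that every
  nontrivial component is a corona.\<close>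

definition leaf :: "('a \<Rightarrow> 'a \<Rightarrow> bool) \<Rightarrow> 'a \<Rightarrow> bool" where
  "leaf E x \<longleftrightarrow> (\<exists>y. {z. E x z} = {y})"

definition support :: "('a \<Rightarrow> 'a \<Rightarrow> bool) \<Rightarrow> 'a \<Rightarrow> bool" where
  "support E v \<longleftrightarrow> (\<exists>l. E v l \<and> leaf E l)"

lemma leaf_neighbours: "leaf E x \<Longrightarrow> E x y \<Longrightarrow> {z. E x z} = {y}"
  unfolding leaf_def by (metis mem_Collect_eq singletonD)

lemma not_leafE:
  assumes "E x a" and "\<not> leaf E x"
  obtains c where "E x c" and "c \<noteq> a"
  using assms unfolding leaf_def by blast

lemma certified_dominating_iff:
  "certified_dominating V E D \<longleftrightarrow>
     dominating V E D \<and> (\<forall>v\<in>D. \<forall>x. {u \<in> V - D. E v u} \<noteq> {x})"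
proof -
  have "(card A = 0 \<or> card A \<ge> 2) \<longleftrightarrow> (\<forall>x. A \<noteq> {x})" for A :: "'a set"
    using card_1_singleton_iff[of A] by auto
  then show ?thesis
    unfolding certified_dominating_def by blast
qed

lemma certified_dominating_subset: "certified_dominating V E D \<Longrightarrow> D \<subseteq> V"
  unfolding certified_dominating_def dominating_def by blast

lemma certified_dominating_self: "certified_dominating V E V"
  unfolding certified_dominating_def dominating_def by simp

lemma certified_dominating_Diff_iff:
  assumes "S \<subseteq> V"
  shows "certified_dominating V E (V - S) \<longleftrightarrow>
    (\<forall>s\<in>S. \<exists>u\<in>V - S. E s u) \<and> (\<forall>v\<in>V - S. \<forall>x. {u \<in> S. E v u} \<noteq> {x})"
proof -
  have "V - (V - S) = S" using assms by blast
  then show ?thesis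
    unfolding certified_dominating_iff dominating_def by auto
qed

lemma components_closed: "C \<in> components V E \<Longrightarrow> x \<in> C \<Longrightarrow> E x y \<Longrightarrow> y \<in> C"
  unfolding components_def by auto

locale simple_graph =
  fixes V :: "'a set" and E :: "'a \<Rightarrow> 'a \<Rightarrow> bool"
  assumes graph: "graph V E"
begin

lemma finite_V: "finite V"
  using graph unfolding graph_def by blast

lemma sym: "E x y \<Longrightarrow> E y x"
  using graph unfolding graph_def by blast

lemma irrefl: "\<not> E x x"
  using graph unfolding graph_def by blast

lemma edge_in_V: "E x y \<Longrightarrow> x \<in> V" "E x y \<Longrightarrow> y \<in> V"
  using graph unfolding graph_def by blast+

lemma finite_certified_dominating: "finite {D. certified_dominating V E D}"
  by (rule finite_subset[of _ "Pow V"]) (auto dest: certified_dominating_subset simp: finite_V)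

lemma certified_dominating_eq_V_iff_card:
  "certified_dominating V E D \<Longrightarrow> D = V \<longleftrightarrow> card D = card V"
  using card_subset_eq[OF finite_V certified_dominating_subset] by blast

lemma gamma_cer_eq_card_iff:
  "gamma_cer V E = card V \<longleftrightarrow> (\<forall>D. certified_dominating V E D \<longrightarrow> D = V)"
proof
  assume gamma: "gamma_cer V E = card V"
  show "\<forall>D. certified_dominating V E D \<longrightarrow> D = V"
  proof (intro allI impI)
    fix D assume D: "certified_dominating V E D"
    then have "gamma_cer V E \<le> card D"
      unfolding gamma_cer_def using finite_certified_dominating by (intro Min_le) auto
    moreover have "card D \<le> card V"
      using D by (intro card_mono finite_V certified_dominating_subset)
    ultimately show "D = V"
      using D gamma certified_dominating_eq_V_iff_card by simp
  qed
next
  assume "\<forall>D. certified_dominating V E D \<longrightarrow> D = V"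
  then have "{D. certified_dominating V E D} = {V}"
    using certified_dominating_self by blast
  then show "gamma_cer V E = card V"
    unfolding gamma_cer_def by simp
qed

lemma minimal_certified_dominating_exists:
  "\<exists>D. minimal_certified_dominating V E D"
proof -
  have "{D. certified_dominating V E D} \<noteq> {}"
    using certified_dominating_self by blast
  then obtain D where "D \<in> {D. certified_dominating V E D}"
    and "\<forall>D' \<in> {D. certified_dominating V E D}. D' \<subseteq> D \<longrightarrow> D = D'"
    using finite_has_minimal[OF finite_certified_dominating] by blast
  then have "minimal_certified_dominating V E D"
    unfolding minimal_certified_dominating_def by auto
  then show ?thesis ..
qed

lemma Gamma_cer_eq_card_iff:
  "Gamma_cer V E = card V \<longleftrightarrow> (\<forall>D. certified_dominating V E D \<longrightarrow> D = V)"
proof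
  let ?M = "{D. minimal_certified_dominating V E D}"
  have "finite ?M"
    using finite_certified_dominating
    by (rule rev_finite_subset) (auto simp: minimal_certified_dominating_def)
  moreover have "?M \<noteq> {}"
    using minimal_certified_dominating_exists by blast
  ultimately have "Gamma_cer V E \<in> card ` ?M"
    unfolding Gamma_cer_def by (intro Max_in) auto
  moreover assume "Gamma_cer V E = card V"
  ultimately obtain D where D: "minimal_certified_dominating V E D" "card D = card V"
    by auto
  then have "D = V"
    using certified_dominating_eq_V_iff_card unfolding minimal_certified_dominating_def by blast
  show "\<forall>D'. certified_dominating V E D' \<longrightarrow> D' = V"
  proof (intro allI impI)
    fix D' assume D': "certified_dominating V E D'"
    then have "\<not> D' \<subset> V"
      using D(1) \<open>D = V\<close> unfolding minimal_certified_dominating_def by blast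
    then show "D' = V"
      using certified_dominating_subset[OF D'] by blast
  qed
next
  assume "\<forall>D. certified_dominating V E D \<longrightarrow> D = V"
  then have "{D. minimal_certified_dominating V E D} = {V}"
    using certified_dominating_self unfolding minimal_certified_dominating_def by blast
  then show "Gamma_cer V E = card V"
    unfolding Gamma_cer_def by simp
qed

lemma components_subset: "C \<in> components V E \<Longrightarrow> C \<subseteq> V"
proof
  fix x assume "C \<in> components V E" and "x \<in> C"
  then obtain v where v: "v \<in> V" and "E\<^sup>*\<^sup>* v x"
    unfolding components_def by blast
  from \<open>E\<^sup>*\<^sup>* v x\<close> show "x \<in> V"
    using v by (induction rule: rtranclp_induct) (auto intro: edge_in_V)
qed

lemma components_connected:
  assumes "C \<in> components V E" and "x \<in> C" and "y \<in> C"
  shows "E\<^sup>*\<^sup>* x y"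
proof -
  obtain v where "E\<^sup>*\<^sup>* v x" and "E\<^sup>*\<^sup>* v y"
    using assms unfolding components_def by blast
  moreover have "symp E"
    using sym by (rule sympI)
  ultimately show ?thesis
    by (metis rtranclp_trans sympD symp_rtranclp)
qed

lemma edge_in_component:
  assumes "E v u"
  obtains C where "C \<in> components V E" and "v \<in> C" and "u \<in> C" and "card C \<ge> 2"
proof
  let ?C = "{x. E\<^sup>*\<^sup>* v x}"
  show "?C \<in> components V E" "v \<in> ?C" "u \<in> ?C"
    using assms edge_in_V(1) unfolding components_def by auto
  moreover have "v \<noteq> u"
    using assms irrefl by blast
  ultimately show "card ?C \<ge> 2"
    using card_mono[OF rev_finite_subset[OF finite_V components_subset], of ?C "{v, u}"]
    by fastforce
qed

lemma certified_dominating_contains_support: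
  assumes D: "certified_dominating V E D" and "leaf E x" and "E x y"
  shows "y \<in> D"
proof (rule ccontr)
  assume "y \<notin> D"
  have N: "{z. E x z} = {y}"
    using leaf_neighbours[OF \<open>leaf E x\<close> \<open>E x y\<close>] .
  show False
  proof (cases "x \<in> D")
    case True
    then have "{u \<in> V - D. E x u} = {y}"
      using N \<open>y \<notin> D\<close> edge_in_V(2)[OF \<open>E x y\<close>] by auto
    then show False
      using D True unfolding certified_dominating_iff by blast
  next
    case False
    then have "\<exists>u \<in> D. E x u"
      using D edge_in_V(1)[OF \<open>E x y\<close>] unfolding certified_dominating_iff dominating_def by blast
    then show False
      using N \<open>y \<notin> D\<close> by auto
  qed
qed

lemma certified_dominating_leaf_outsideE:
  assumes D: "certified_dominating V E D" and "leaf E x" and "E x y" and "x \<notin> D"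
  obtains z where "E y z" and "z \<notin> D" and "z \<noteq> x"
proof -
  have "y \<in> D"
    using assms certified_dominating_contains_support by blast
  then have "{u \<in> V - D. E y u} \<noteq> {x}"
    using D unfolding certified_dominating_iff by blast
  moreover have "x \<in> {u \<in> V - D. E y u}"
    using assms sym edge_in_V by blast
  ultimately obtain z where "z \<in> {u \<in> V - D. E y u}" and "z \<noteq> x"
    by blast
  then show ?thesis
    using that by blast
qed

lemma corona_component_subset_certified:
  assumes C: "C \<in> components V E" and corona: "is_corona C (induced E C)"
    and D: "certified_dominating V E D"
  shows "C \<subseteq> D"
proof -
  obtain H p where "H \<subseteq> C" and bij: "bij_betw p H (C - H)"
    and pendant: "\<forall>x \<in> C - H. \<forall>y. induced E C x y \<longleftrightarrow> (y \<in> H \<and> p y = x)"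
    using corona unfolding is_corona_def by blast
  have pendant_E: "E x y \<longleftrightarrow> y \<in> H \<and> p y = x" if "x \<in> C - H" for x y
    using pendant that components_closed[OF C] \<open>H \<subseteq> C\<close> unfolding induced_def by blast
  have leaf_p: "leaf E (p h)" and edge_p: "E (p h) h" if "h \<in> H" for h
  proof -
    have "{z. E (p h) z} = {h}"
      using pendant_E bij_betw_apply[OF bij that] bij_betw_imp_inj_on[OF bij] that
      unfolding inj_on_def by blast
    then show "leaf E (p h)" "E (p h) h"
      unfolding leaf_def by blast+
  qed
  have "H \<subseteq> D"
    using leaf_p edge_p certified_dominating_contains_support[OF D] by blast
  moreover have "C - H \<subseteq> D"
  proof
    fix x assume x: "x \<in> C - H"
    then obtain h where h: "h \<in> H" "x = p h"
      using bij unfolding bij_betw_def by blast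
    show "x \<in> D"
    proof (rule ccontr)
      assume "x \<notin> D"
      then obtain z where z: "E h z" "z \<notin> D" "z \<noteq> x"
        using certified_dominating_leaf_outsideE[OF D leaf_p edge_p] h by metis
      have "z \<in> C - H"
        using components_closed[OF C _ z(1)] h(1) \<open>H \<subseteq> C\<close> \<open>H \<subseteq> D\<close> z(2) by blast
      then have "p h = z"
        using pendant_E sym[OF z(1)] by blast
      then show False
        using h(2) z(3) by simp
    qed
  qed
  ultimately show ?thesis
    by blast
qed

lemma certified_dominating_eq_V_if_coronas:
  assumes "\<forall>C \<in> components V E. card C \<ge> 2 \<longrightarrow> is_corona C (induced E C)"
    and D: "certified_dominating V E D"
  shows "D = V"
proof -
  have "v \<in> D" if "v \<in> V" for v
  proof (cases "\<exists>u. E v u")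
    case True
    then obtain u where "E v u"
      by blast
    then obtain C where "C \<in> components V E" "v \<in> C" "card C \<ge> 2"
      using edge_in_component by blast
    then show ?thesis
      using assms corona_component_subset_certified by blast
  next
    case False
    then show ?thesis
      using D that unfolding certified_dominating_def dominating_def by blast
  qed
  then show ?thesis
    using certified_dominating_subset[OF D] by blast
qed

lemma certified_dominating_Diff_twin_leaves:
  assumes "E v a" and "E v b" and "a \<noteq> b" and "leaf E a" and "leaf E b"
  shows "certified_dominating V E (V - {a, b})"
proof -
  have Na: "{z. E a z} = {v}"
    using leaf_neighbours[OF \<open>leaf E a\<close> sym[OF \<open>E v a\<close>]] .
  have Nb: "{z. E b z} = {v}"
    using leaf_neighbours[OF \<open>leaf E b\<close> sym[OF \<open>E v b\<close>]] .
  have "v \<noteq> a" "v \<noteq> b"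
    using assms(1,2) irrefl by blast+
  have ab: "{a, b} \<subseteq> V"
    using edge_in_V(2) assms(1,2) by blast
  have "\<forall>s\<in>{a, b}. \<exists>u\<in>V - {a, b}. E s u"
    using \<open>v \<noteq> a\<close> \<open>v \<noteq> b\<close> edge_in_V(1)[OF \<open>E v a\<close>] sym[OF \<open>E v a\<close>] sym[OF \<open>E v b\<close>]
    by blast
  moreover have "\<forall>w\<in>V - {a, b}. \<forall>x. {u \<in> {a, b}. E w u} \<noteq> {x}"
  proof (intro ballI allI)
    fix w x assume "w \<in> V - {a, b}"
    show "{u \<in> {a, b}. E w u} \<noteq> {x}"
    proof (cases "w = v")
      case True
      then have "{u \<in> {a, b}. E w u} = {a, b}"
        using \<open>E v a\<close> \<open>E v b\<close> by auto
      then show ?thesis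
        using \<open>a \<noteq> b\<close> by auto
    next
      case False
      then have "\<not> E w a" and "\<not> E w b"
        using Na Nb sym by (metis mem_Collect_eq singletonD)+
      then have "{u \<in> {a, b}. E w u} = {}"
        by auto
      then show ?thesis
        by (metis insert_not_empty)
    qed
  qed
  ultimately show ?thesis
    unfolding certified_dominating_Diff_iff[OF ab] ..
qed

lemma maximal_independent_subsetE:
  assumes "A \<subseteq> V"
  obtains I where "I \<subseteq> A" and "\<forall>x\<in>I. \<forall>y\<in>I. \<not> E x y" and "\<forall>a\<in>A - I. \<exists>i\<in>I. E a i"
proof -
  define Ind where "Ind = {I. I \<subseteq> A \<and> (\<forall>x\<in>I. \<forall>y\<in>I. \<not> E x y)}"
  have "finite Ind"
    using rev_finite_subset[OF finite_V assms] unfolding Ind_def by simp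
  moreover have "{} \<in> Ind"
    unfolding Ind_def by simp
  ultimately obtain I where "I \<in> Ind" and max: "\<forall>J\<in>Ind. I \<subseteq> J \<longrightarrow> I = J"
    using finite_has_maximal2 by blast
  then have I: "I \<subseteq> A" "\<forall>x\<in>I. \<forall>y\<in>I. \<not> E x y"
    unfolding Ind_def by auto
  have "\<exists>i\<in>I. E a i" if a: "a \<in> A - I" for a
  proof (rule ccontr)
    assume "\<not> (\<exists>i\<in>I. E a i)"
    then have "insert a I \<in> Ind"
      using I a irrefl sym unfolding Ind_def by blast
    then show False
      using max a by blast
  qed
  then show thesis
    using I by (intro that) blast+
qed

definition far_from_leaves :: "'a set" where
  "far_from_leaves = {b \<in> V. (\<exists>y. E b y) \<and> \<not> leaf E b \<and> \<not> support E b}"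

definition far_hubs :: "'a set" where
  "far_hubs = {b \<in> far_from_leaves.
     \<exists>a c. a \<noteq> c \<and> a \<in> far_from_leaves \<and> c \<in> far_from_leaves \<and> E b a \<and> E b c}"

definition pendant_leaves :: "'a set \<Rightarrow> 'a set" where
  "pendant_leaves T = {l. leaf E l \<and> (\<exists>m. E l m \<and> \<not> leaf E m \<and> (\<exists>t\<in>T. E m t))}"

definition removable :: "'a set \<Rightarrow> 'a set" where
  "removable I = (far_from_leaves - I) \<union> pendant_leaves (far_from_leaves - I)"

lemma far_from_leaves_not_leaf: "b \<in> far_from_leaves \<Longrightarrow> \<not> leaf E b"
  and far_from_leaves_neighbour_not_leaf: "b \<in> far_from_leaves \<Longrightarrow> E b y \<Longrightarrow> \<not> leaf E y"
  unfolding far_from_leaves_def support_def by blast+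

lemma leaf_neighbour_not_far: "leaf E l \<Longrightarrow> E m l \<Longrightarrow> m \<notin> far_from_leaves"
  using far_from_leaves_neighbour_not_leaf by blast

lemma removable_subset: "removable I \<subseteq> V"
  unfolding removable_def far_from_leaves_def pendant_leaves_def using edge_in_V(1) by blast

lemma not_removable: "u \<notin> far_from_leaves \<Longrightarrow> \<not> leaf E u \<Longrightarrow> u \<notin> removable I"
  unfolding removable_def pendant_leaves_def by blast

context
  fixes I :: "'a set"
  assumes I_subset: "I \<subseteq> far_hubs"
    and I_independent: "\<forall>x\<in>I. \<forall>y\<in>I. \<not> E x y"
    and I_maximal: "\<forall>b\<in>far_hubs - I. \<exists>i\<in>I. E b i"
begin

lemma removable_outside_neighbour:
  assumes s: "s \<in> removable I"
  shows "\<exists>u\<in>V - removable I. E s u"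
proof -
  consider "s \<in> far_hubs - I" | "s \<in> far_from_leaves - far_hubs" | "s \<in> pendant_leaves (far_from_leaves - I)"
    using s unfolding removable_def far_hubs_def by blast
  then obtain u where "E s u" and "u \<notin> removable I"
  proof cases
    case 1
    then obtain i where "i \<in> I" and "E s i"
      using I_maximal by blast
    moreover have "i \<notin> removable I"
      using \<open>i \<in> I\<close> I_subset far_from_leaves_not_leaf
      unfolding removable_def pendant_leaves_def far_hubs_def by blast
    ultimately show thesis
      using that by blast
  next
    case 2
    then obtain a where "E s a"
      unfolding far_from_leaves_def by blast
    moreover obtain c where "E s c" and "c \<noteq> a"
      using not_leafE[OF \<open>E s a\<close> far_from_leaves_not_leaf] 2 by blast
    ultimately obtain u where "E s u" and "u \<notin> far_from_leaves"
      using 2 unfolding far_hubs_def by blast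
    moreover have "\<not> leaf E u"
      using 2 \<open>E s u\<close> far_from_leaves_neighbour_not_leaf by blast
    ultimately show thesis
      using that not_removable by blast
  next
    case 3
    then obtain m where "E s m" and "\<not> leaf E m" and "leaf E s"
      unfolding pendant_leaves_def by blast
    moreover have "m \<notin> far_from_leaves"
      using leaf_neighbour_not_far \<open>leaf E s\<close> sym[OF \<open>E s m\<close>] by blast
    ultimately show thesis
      using that not_removable by blast
  qed
  then show ?thesis
    using edge_in_V(2) by blast
qed
lemma removable_not_single_neighbour:
  assumes u: "u \<in> V - removable I"
  shows "{w \<in> removable I. E u w} \<noteq> {x}"
proof
  assume single: "{w \<in> removable I. E u w} = {x}"
  then have "x \<in> removable I" and "E u x" and only_x: "\<And>w. w \<in> removable I \<Longrightarrow> E u w \<Longrightarrow> w = x"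
    by auto
  consider "u \<in> far_from_leaves" | "u \<notin> far_from_leaves" "leaf E u"
    | "u \<notin> far_from_leaves" "\<not> leaf E u"
    by blast
  then show False
  proof cases
    case 1
    then have "u \<in> I"
      using u unfolding removable_def by blast
    then obtain a c where "a \<noteq> c" "a \<in> far_from_leaves" "c \<in> far_from_leaves" "E u a" "E u c"
      using I_subset unfolding far_hubs_def by blast
    moreover have "a \<notin> I" and "c \<notin> I"
      using I_independent \<open>u \<in> I\<close> \<open>E u a\<close> \<open>E u c\<close> by blast+
    ultimately have "a \<in> removable I" and "c \<in> removable I"
      unfolding removable_def by blast+
    then show False
      using only_x \<open>a \<noteq> c\<close> \<open>E u a\<close> \<open>E u c\<close> by blast
  next
    case 2
    then have "x \<notin> far_from_leaves"
      using leaf_neighbour_not_far \<open>E u x\<close> sym by blast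
    then obtain m where "leaf E x" and "E x m" and "\<not> leaf E m"
      using \<open>x \<in> removable I\<close> unfolding removable_def pendant_leaves_def by blast
    then have "m = u"
      using leaf_neighbours sym[OF \<open>E u x\<close>] by (metis mem_Collect_eq singletonD)
    then show False
      using 2 \<open>\<not> leaf E m\<close> by blast
  next
    case 3
    then obtain l where "E u l" and "leaf E l"
      using u \<open>E u x\<close> unfolding far_from_leaves_def support_def by blast
    show False
    proof (cases "x \<in> far_from_leaves")
      case True
      then have "x \<in> far_from_leaves - I"
        using \<open>x \<in> removable I\<close> far_from_leaves_not_leaf
        unfolding removable_def pendant_leaves_def by blast
      then have "l \<in> pendant_leaves (far_from_leaves - I)"
        using \<open>leaf E l\<close> sym[OF \<open>E u l\<close>] 3 \<open>E u x\<close> unfolding pendant_leaves_def by blast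
      then have "l \<in> removable I"
        unfolding removable_def by blast
      then have "l = x"
        using only_x \<open>E u l\<close> by blast
      then show False
        using True \<open>leaf E l\<close> far_from_leaves_not_leaf by blast
    next
      case False
      then obtain m t where "leaf E x" "E x m" "t \<in> far_from_leaves - I" "E m t"
        using \<open>x \<in> removable I\<close> unfolding removable_def pendant_leaves_def by blast
      then have "m = u"
        using leaf_neighbours sym[OF \<open>E u x\<close>] by (metis mem_Collect_eq singletonD)
      then have "t = x"
        using only_x \<open>t \<in> far_from_leaves - I\<close> \<open>E m t\<close> unfolding removable_def by blast
      then show False
        using False \<open>t \<in> far_from_leaves - I\<close> by blast
    qed
  qed
qed

lemma certified_dominating_Diff_removable: "certified_dominating V E (V - removable I)"
  unfolding certified_dominating_Diff_iff[OF removable_subset]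
  using removable_outside_neighbour removable_not_single_neighbour by blast

end

lemma certified_dominating_properE:
  assumes "v \<in> V" and "E v y" and "\<not> leaf E v" and "\<not> support E v"
  obtains D where "certified_dominating V E D" and "D \<noteq> V"
proof -
  have "far_hubs \<subseteq> V"
    unfolding far_hubs_def far_from_leaves_def by blast
  then obtain I where I: "I \<subseteq> far_hubs" "\<forall>x\<in>I. \<forall>y\<in>I. \<not> E x y" "\<forall>b\<in>far_hubs - I. \<exists>i\<in>I. E b i"
    by (rule maximal_independent_subsetE)
  have v: "v \<in> far_from_leaves"
    using assms unfolding far_from_leaves_def by blast
  have "far_from_leaves - I \<noteq> {}"
  proof (cases "v \<in> I")
    case True
    then obtain a where "a \<in> far_from_leaves" and "E v a"
      using I(1) unfolding far_hubs_def by blast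
    moreover have "a \<notin> I"
      using I(2) True \<open>E v a\<close> by blast
    ultimately show ?thesis
      by blast
  next
    case False
    then show ?thesis
      using v by blast
  qed
  then have "V - removable I \<noteq> V"
    using removable_subset unfolding removable_def by blast
  then show thesis
    by (rule that[OF certified_dominating_Diff_removable[OF I]])
qed

lemma component_adjacent_leaves:
  assumes C: "C \<in> components V E" and "x \<in> C" and "leaf E x" and "leaf E y" and "E x y"
  shows "C = {x, y}"
proof
  show "{x, y} \<subseteq> C"
    using components_closed[OF C \<open>x \<in> C\<close> \<open>E x y\<close>] \<open>x \<in> C\<close> by blast
  have Nx: "{w. E x w} = {y}" and Ny: "{w. E y w} = {x}"
    using leaf_neighbours \<open>leaf E x\<close> \<open>leaf E y\<close> \<open>E x y\<close> sym by metis+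
  show "C \<subseteq> {x, y}"
  proof
    fix z assume "z \<in> C"
    with C \<open>x \<in> C\<close> have "E\<^sup>*\<^sup>* x z"
      by (rule components_connected)
    then show "z \<in> {x, y}"
      by (induction rule: rtranclp_induct) (use Nx Ny in auto)
  qed
qed

lemma is_corona_leaf_edge:
  assumes "E x y" and "leaf E y"
  shows "is_corona {x, y} (induced E {x, y})"
proof -
  have "x \<noteq> y"
    using assms irrefl by blast
  then have bij: "bij_betw (\<lambda>_. y) {x} ({x, y} - {x})"
    by (simp add: insert_Diff_if)
  have "{w. E y w} = {x}"
    using leaf_neighbours[OF \<open>leaf E y\<close> sym[OF \<open>E x y\<close>]] .
  then have "\<forall>z\<in>{x, y} - {x}. \<forall>w. induced E {x, y} z w \<longleftrightarrow> w \<in> {x} \<and> y = z"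
    unfolding induced_def by auto
  then show ?thesis
    unfolding is_corona_def using bij by blast
qed

lemma component_vertex_has_neighbour:
  assumes C: "C \<in> components V E" and "card C \<ge> 2" and "x \<in> C"
  obtains y where "E x y"
proof -
  obtain z where "z \<in> C" and "z \<noteq> x"
    using \<open>card C \<ge> 2\<close> \<open>x \<in> C\<close>
    by (metis card_le_Suc0_iff_eq not_less_eq_eq numeral_2_eq_2 card.infinite zero_le)
  then have "E\<^sup>*\<^sup>* x z"
    using components_connected[OF C \<open>x \<in> C\<close>] by blast
  then show thesis
    using \<open>z \<noteq> x\<close> that by (cases rule: converse_rtranclpE) auto
qed

lemma is_corona_componentI:
  assumes C: "C \<in> components V E"
    and inner: "\<And>h. h \<in> C \<Longrightarrow> \<not> leaf E h \<Longrightarrow> \<exists>!l. E h l \<and> leaf E l"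
    and outer: "\<And>x y. x \<in> C \<Longrightarrow> leaf E x \<Longrightarrow> E x y \<Longrightarrow> \<not> leaf E y"
  shows "is_corona C (induced E C)"
proof -
  define H where "H = {h \<in> C. \<not> leaf E h}"
  define p where "p h = (THE l. E h l \<and> leaf E l)" for h
  have p: "E h (p h)" "leaf E (p h)" and p_unique: "\<And>l. E h l \<Longrightarrow> leaf E l \<Longrightarrow> l = p h"
    if "h \<in> H" for h
  proof -
    have ex1: "\<exists>!l. E h l \<and> leaf E l"
      using inner that unfolding H_def by blast
    show "E h (p h)" "leaf E (p h)"
      using theI'[OF ex1] unfolding p_def by simp_all
    show "l = p h" if "E h l" and "leaf E l" for l
      using the1_equality[OF ex1, of l] that unfolding p_def by simp
  qed
  have pendant: "E x y \<longleftrightarrow> y \<in> H \<and> p y = x" if x: "x \<in> C - H" for x y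
  proof
    assume "E x y"
    moreover have "leaf E x"
      using x unfolding H_def by blast
    ultimately have "y \<in> H"
      using outer x components_closed[OF C] unfolding H_def by blast
    then show "y \<in> H \<and> p y = x"
      using p_unique sym \<open>E x y\<close> \<open>leaf E x\<close> by blast
  next
    assume "y \<in> H \<and> p y = x"
    then show "E x y"
      using p(1) sym by blast
  qed
  have "H \<subseteq> C"
    unfolding H_def by blast
  moreover have "inj_on p H"
  proof (rule inj_onI)
    fix h h' assume "h \<in> H" "h' \<in> H" "p h = p h'"
    then show "h = h'"
      using leaf_neighbours[OF p(2) sym[OF p(1)]] p(1) sym by (metis mem_Collect_eq singletonD)
  qed
  moreover have "p ` H = C - H"
  proof
    show "p ` H \<subseteq> C - H"
      using p components_closed[OF C] \<open>H \<subseteq> C\<close> unfolding H_def by blast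
    show "C - H \<subseteq> p ` H"
    proof
      fix x assume x: "x \<in> C - H"
      then obtain y where "E x y"
        unfolding H_def leaf_def by blast
      then have "y \<in> H" and "x = p y"
        using pendant[OF x] by auto
      then show "x \<in> p ` H"
        by blast
    qed
  qed
  moreover have "\<forall>x \<in> C - H. \<forall>y. induced E C x y \<longleftrightarrow> y \<in> H \<and> p y = x"
    using pendant \<open>H \<subseteq> C\<close> unfolding induced_def by blast
  ultimately show ?thesis
    unfolding is_corona_def bij_betw_def by blast
qed

lemma leaves_with_common_neighbour_eq_if_certified_dominating_eq_V:
  assumes only_V: "\<forall>D. certified_dominating V E D \<longrightarrow> D = V"
    and "E v a" and "E v b" and "leaf E a" and "leaf E b"
  shows "a = b"
proof (rule ccontr)
  assume "a \<noteq> b"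
  then have "V - {a, b} = V"
    using only_V certified_dominating_Diff_twin_leaves assms(2-5) by blast
  then show False
    using edge_in_V(2)[OF \<open>E v a\<close>] by blast
qed

lemma support_if_certified_dominating_eq_V:
  assumes only_V: "\<forall>D. certified_dominating V E D \<longrightarrow> D = V"
    and "E v y" and "\<not> leaf E v"
  shows "support E v"
  using certified_dominating_properE[OF edge_in_V(1)[OF \<open>E v y\<close>] \<open>E v y\<close> \<open>\<not> leaf E v\<close>] only_V
  by blast

lemma coronas_if_certified_dominating_eq_V:
  assumes only_V: "\<forall>D. certified_dominating V E D \<longrightarrow> D = V"
  shows "\<forall>C \<in> components V E. card C \<ge> 2 \<longrightarrow> is_corona C (induced E C)"
proof (intro ballI impI)
  fix C assume C: "C \<in> components V E" and "card C \<ge> 2"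
  show "is_corona C (induced E C)"
  proof (cases "\<exists>h \<in> C. \<not> leaf E h")
    case True
    show ?thesis
    proof (rule is_corona_componentI[OF C])
      fix h assume "h \<in> C" and "\<not> leaf E h"
      then obtain y where "E h y"
        using component_vertex_has_neighbour[OF C \<open>card C \<ge> 2\<close>] by blast
      then show "\<exists>!l. E h l \<and> leaf E l"
        using support_if_certified_dominating_eq_V[OF only_V _ \<open>\<not> leaf E h\<close>]
          leaves_with_common_neighbour_eq_if_certified_dominating_eq_V[OF only_V, of h]
        unfolding support_def by blast
    next
      fix x y assume "x \<in> C" and "leaf E x" and "E x y"
      show "\<not> leaf E y"
      proof
        assume "leaf E y"
        then have "C = {x, y}"
          using component_adjacent_leaves[OF C \<open>x \<in> C\<close> \<open>leaf E x\<close>] \<open>E x y\<close> by blast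
        then show False
          using True \<open>leaf E x\<close> \<open>leaf E y\<close> by blast
      qed
    qed
  next
    case False
    obtain x where "x \<in> C"
      using C unfolding components_def by blast
    moreover obtain y where "E x y"
      using component_vertex_has_neighbour[OF C \<open>card C \<ge> 2\<close> \<open>x \<in> C\<close>] .
    ultimately have "C = {x, y}"
      using component_adjacent_leaves[OF C] False components_closed[OF C] by blast
    then show ?thesis
      using is_corona_leaf_edge[OF \<open>E x y\<close>] False \<open>E x y\<close> components_closed[OF C \<open>x \<in> C\<close>]
      by auto
  qed
qed

end

theorem theorem3p2:
  fixes V :: "'a set" and E :: "'a \<Rightarrow> 'a \<Rightarrow> bool" and n :: nat
  assumes "graph V E" and "n = card V"
  shows "((\<forall>C \<in> components V E. card C \<ge> 2 \<longrightarrow> is_corona C (induced E C))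
            \<longleftrightarrow> gamma_cer V E = n)
       \<and> (gamma_cer V E = n \<longleftrightarrow> Gamma_cer V E = n)"
proof -
  interpret simple_graph V E
    using assms(1) by unfold_locales
  have "(\<forall>C \<in> components V E. card C \<ge> 2 \<longrightarrow> is_corona C (induced E C))
      \<longleftrightarrow> (\<forall>D. certified_dominating V E D \<longrightarrow> D = V)"
    using certified_dominating_eq_V_if_coronas coronas_if_certified_dominating_eq_V by blast
  then show ?thesis
    using gamma_cer_eq_card_iff Gamma_cer_eq_card_iff assms(2) by simp
qed

end
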